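(* Let $\Lambda=\{ab^ic\mid i\geq 1\}$. The submonoid of $\Pi_2=\langle a,b,c\mid (ab^ic)^2=1\ (i\geq 1)\rangle$ generated by the elements represented by the words of $\Lambda$ is equal to the group of units $U(\Pi_2)$.
   Context: The group of units $U(M)$ of a monoid $M$ is the set of elements having both a left and a right inverse. *)

theory Defs
  imports "HOL-Algebra.Group"
begin

datatype gen = Ga | Gb | Gc

definition lam_word :: "nat \<Rightarrow> gen list" where
  "lam_word i = [Ga] @ replicate i Gb @ [Gc]"

definition Lambda :: "gen list set" where
  "Lambda = {lam_word i | i. i \<ge> 1}"

definition pi2_rels :: "(gen list \<times> gen list) set" where
  "pi2_rels = {(lam_word i @ lam_word i, []) | i. i \<ge> 1}"

definition pi2_step :: "(gen list \<times> gen list) set" where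
  "pi2_step = {(u @ l @ v, u @ r @ v) | u l r v. (l, r) \<in> pi2_rels}"

definition pi2_cong :: "(gen list \<times> gen list) set" where
  "pi2_cong = (pi2_step \<union> pi2_step\<inverse>)\<^sup>*"

definition cls :: "gen list \<Rightarrow> gen list set" where
  "cls w = pi2_cong `` {w}"

definition Pi2 :: "gen list set monoid" where
  "Pi2 = \<lparr>carrier = UNIV // pi2_cong,
          mult = (\<lambda>X Y. cls ((SOME x. x \<in> X) @ (SOME y. y \<in> Y))),
          one = cls []\<rparr>"

definition gen_submonoid :: "('a, 'b) monoid_scheme \<Rightarrow> 'a set \<Rightarrow> 'a set" where
  "gen_submonoid M S = \<Inter>{H. submonoid H M \<and> S \<subseteq> H}"

end

theory Submission
  imports Defs
begin

text \<open>
  Reading a word from left to right onto a stack and deleting a relator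
  \<open>(a b\<^sup>i c)\<^sup>2\<close> as soon as it appears on top of the stack computes a normal form:
  since two relators that end at the same place coincide, the result does not
  change when a relator is inserted or deleted anywhere, so it is an invariant of
  the elements of \<open>\<Pi>\<^sub>2\<close>.  Let \<open>x\<close> be a nonempty reduced word representing a unit.
  Reducing \<open>x v = 1\<close>, the first letter of \<open>x\<close> sits at the bottom of the stack until it is
  removed as the first letter of a relator, so \<open>x\<close> starts with \<open>a\<close>.  Reducing \<open>u x = 1\<close>,
  the first deletion uses a relator that ends inside \<open>x\<close> and starts inside the reduced
  form of \<open>u\<close>; its part inside \<open>x\<close> is a proper suffix of \<open>(a b\<^sup>i c)\<^sup>2\<close> beginning with
  \<open>a\<close>, i.e. \<open>a b\<^sup>i c\<close>.  Hence \<open>x = a b\<^sup>i c x'\<close>, where \<open>x'\<close> is again a unit because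
  \<open>a b\<^sup>i c\<close> is an involution, and induction on the length finishes the proof.
\<close>

lemma gen_submonoid_least: "submonoid H M \<Longrightarrow> S \<subseteq> H \<Longrightarrow> gen_submonoid M S \<subseteq> H"
  unfolding gen_submonoid_def by blast

lemma gen_submonoid_one: "\<one>\<^bsub>M\<^esub> \<in> gen_submonoid M S"
  unfolding gen_submonoid_def by (auto dest: submonoid.one_closed)

lemma gen_submonoid_base: "x \<in> S \<Longrightarrow> x \<in> gen_submonoid M S"
  unfolding gen_submonoid_def by blast

lemma gen_submonoid_mult:
  "x \<in> gen_submonoid M S \<Longrightarrow> y \<in> gen_submonoid M S \<Longrightarrow> x \<otimes>\<^bsub>M\<^esub> y \<in> gen_submonoid M S"
  unfolding gen_submonoid_def by (auto dest: submonoid.m_closed)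

lemma (in monoid) submonoid_Units: "submonoid (Units G) G"
  by unfold_locales auto

definition relator :: "nat \<Rightarrow> gen list" where
  "relator i = lam_word i @ lam_word i"

definition reduced :: "gen list \<Rightarrow> bool" where
  "reduced w \<longleftrightarrow> (\<forall>u v i. 1 \<le> i \<longrightarrow> w \<noteq> u @ relator i @ v)"

definition push_letter :: "gen list \<Rightarrow> gen \<Rightarrow> gen list" where
  "push_letter s x =
     (if \<exists>u i. 1 \<le> i \<and> s @ [x] = u @ relator i
      then SOME u. \<exists>i. 1 \<le> i \<and> s @ [x] = u @ relator i
      else s @ [x])"

definition reduce :: "gen list \<Rightarrow> gen list \<Rightarrow> gen list" where
  "reduce s w = foldl push_letter s w"

lemma lam_word_suffix_inj:
  assumes "u @ lam_word i = u' @ lam_word k"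
  shows "i = k"
proof -
  have leading_Gb: "replicate i Gb @ Ga # xs = replicate k Gb @ Ga # ys \<Longrightarrow> i = k"
    for xs ys :: "gen list" and i k :: nat
  proof (induction i arbitrary: k)
    case 0 then show ?case by (cases k) auto
  next
    case (Suc i) then show ?case by (cases k) auto
  qed
  from assms have "rev (lam_word i) @ rev u = rev (lam_word k) @ rev u'"
    by (metis rev_append)
  then show ?thesis
    by (intro leading_Gb[of _ "rev u" _ "rev u'"]) (simp add: lam_word_def)
qed

lemma relator_suffix_inj:
  assumes "u @ relator i = u' @ relator k"
  shows "i = k" "u = u'"
proof -
  from assms have "(u @ lam_word i) @ lam_word i = (u' @ lam_word k) @ lam_word k"
    by (simp add: relator_def)
  then show "i = k" by (rule lam_word_suffix_inj)
  with assms show "u = u'" by simp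
qed

lemma relator_ne_Nil [simp]: "relator i \<noteq> []"
  by (simp add: relator_def lam_word_def)

lemma hd_relator [simp]: "hd (relator i) = Ga"
  by (simp add: relator_def lam_word_def)

lemma last_relator [simp]: "last (relator i) = Gc"
  by (simp add: relator_def lam_word_def)

lemma push_letter_cases:
  obtains (keep) "push_letter s x = s @ [x]" "\<nexists>u i. 1 \<le> i \<and> s @ [x] = u @ relator i"
  | (pop) u i where "1 \<le> i" "s @ [x] = u @ relator i" "push_letter s x = u"
proof (cases "\<exists>u i. 1 \<le> i \<and> s @ [x] = u @ relator i")
  case True
  then obtain u i where ui: "1 \<le> i" "s @ [x] = u @ relator i" by blast
  then have "push_letter s x = u"
    unfolding push_letter_def by (auto intro!: some_equality dest: relator_suffix_inj)
  with ui pop show thesis by blast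
next
  case False
  then have "push_letter s x = s @ [x]" by (auto simp: push_letter_def)
  with False keep show thesis by blast
qed

lemma push_letter_pop: "1 \<le> i \<Longrightarrow> s @ [x] = u @ relator i \<Longrightarrow> push_letter s x = u"
  by (cases s x rule: push_letter_cases) (auto dest: relator_suffix_inj)

lemma push_letter_not_Gc:
  assumes "x \<noteq> Gc"
  shows "push_letter s x = s @ [x]"
proof (cases s x rule: push_letter_cases)
  case (pop u i)
  then have "last (s @ [x]) = last (u @ relator i)" by simp
  with assms show ?thesis by simp
qed

lemma reduce_Nil [simp]: "reduce s [] = s"
  and reduce_Cons [simp]: "reduce s (x # w) = reduce (push_letter s x) w"
  and reduce_append [simp]: "reduce s (v @ w) = reduce (reduce s v) w"
  by (simp_all add: reduce_def)

lemma reduce_replicate_Gb: "reduce s (replicate n Gb) = s @ replicate n Gb"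
  by (induction n arbitrary: s) (simp_all add: push_letter_not_Gc)

lemma reduce_lam_word: "reduce s (lam_word i) = push_letter (s @ Ga # replicate i Gb) Gc"
  by (simp add: lam_word_def reduce_replicate_Gb push_letter_not_Gc)

lemma reduced_Nil [simp]: "reduced []"
  by (simp add: reduced_def)

lemma reduced_appendD:
  assumes "reduced (v @ w)"
  shows "reduced v" "reduced w"
  using assms unfolding reduced_def by (metis append.assoc)+

lemma reduced_snoc_no_pop:
  assumes "reduced (s @ [x])"
  shows "push_letter s x = s @ [x]"
proof (cases s x rule: push_letter_cases)
  case (pop u i)
  with assms show ?thesis unfolding reduced_def by (metis append_Nil2)
qed

lemma reduce_reduced: "reduced (s @ w) \<Longrightarrow> reduce s w = s @ w"
proof (induction w arbitrary: s)
  case (Cons x w)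
  then have "reduced (s @ [x])" using reduced_appendD(1)[of "s @ [x]" w] by simp
  with Cons show ?case by (simp add: reduced_snoc_no_pop)
qed simp

lemma reduced_push_letter:
  assumes s: "reduced s"
  shows "reduced (push_letter s x)"
proof (cases s x rule: push_letter_cases)
  case keep
  have "s @ [x] \<noteq> u @ relator i @ v" if "1 \<le> i" for u v i
  proof (cases v rule: rev_cases)
    case Nil then show ?thesis using keep(2) that by auto
  next
    case (snoc v' y) then show ?thesis using s that unfolding reduced_def by auto
  qed
  then show ?thesis using keep(1) by (simp add: reduced_def)
next
  case (pop u i)
  from pop(2) have "s = u @ butlast (relator i)"
    by (metis butlast_append butlast_snoc relator_ne_Nil)
  with s pop(3) show ?thesis using reduced_appendD(1) by metis
qed

lemma reduced_reduce: "reduced s \<Longrightarrow> reduced (reduce s w)"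
  by (induction w arbitrary: s) (simp_all add: reduced_push_letter)

text \<open>
  If \<open>s\<close> ends in \<open>a b\<^sup>i c\<close>, the first copy of \<open>a b\<^sup>i c\<close> deletes it and the second
  restores it; otherwise the first copy is pushed and the second deletes both.
\<close>
lemma reduce_relator:
  assumes s: "reduced s" and i: "1 \<le> i"
  shows "reduce s (relator i) = s"
proof -
  have push_c: "s' @ lam_word i = (s' @ Ga # replicate i Gb) @ [Gc]" for s'
    by (simp add: lam_word_def)
  show ?thesis
  proof (cases "s @ Ga # replicate i Gb" Gc rule: push_letter_cases)
    case keep
    then have "reduce s (lam_word i) = s @ lam_word i"
      by (simp add: reduce_lam_word push_c)
    moreover have "reduce (s @ lam_word i) (lam_word i) = s"
      unfolding reduce_lam_word using i
      by (intro push_letter_pop) (simp_all add: relator_def lam_word_def)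
    ultimately show ?thesis by (simp add: relator_def)
  next
    case (pop u k)
    then have "s @ lam_word i = (u @ lam_word k) @ lam_word k"
      by (simp add: push_c relator_def)
    then have su: "s = u @ lam_word i"
      using lam_word_suffix_inj by (metis append_same_eq)
    have "reduce s (lam_word i) = u"
      using pop(3) by (simp add: reduce_lam_word)
    then have "reduce s (relator i) = reduce u (lam_word i)"
      by (simp add: relator_def)
    also have "\<dots> = push_letter (u @ Ga # replicate i Gb) Gc"
      by (rule reduce_lam_word)
    also have "\<dots> = s"
      using s su reduced_snoc_no_pop[of "u @ Ga # replicate i Gb" Gc]
      by (simp add: lam_word_def)
    finally show ?thesis .
  qed
qed

lemma equiv_pi2_cong: "equiv UNIV pi2_cong"
  unfolding pi2_cong_def
  by (rule equivI) (auto simp: refl_rtrancl trans_rtrancl intro: sym_rtrancl sym_Un_converse)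

lemma cls_eq_iff: "cls v = cls w \<longleftrightarrow> (v, w) \<in> pi2_cong"
  unfolding cls_def by (rule eq_equiv_class_iff[OF equiv_pi2_cong]) auto

lemma pi2_step_context: "(v, w) \<in> pi2_step \<Longrightarrow> (u @ v @ z, u @ w @ z) \<in> pi2_step"
  unfolding pi2_step_def by clarsimp (metis append.assoc)

lemma pi2_cong_context: "(v, w) \<in> pi2_cong \<Longrightarrow> (u @ v @ z, u @ w @ z) \<in> pi2_cong"
  unfolding pi2_cong_def
proof (induction rule: rtrancl_induct)
  case (step w w')
  then have "(u @ w @ z, u @ w' @ z) \<in> pi2_step \<union> pi2_step\<inverse>"
    using pi2_step_context by blast
  with step.IH show ?case by (rule rtrancl_into_rtrancl)
qed simp

lemma cls_append_cong: "cls v = cls v' \<Longrightarrow> cls w = cls w' \<Longrightarrow> cls (v @ w) = cls (v' @ w')"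
  using pi2_cong_context[of v v' "[]" w] pi2_cong_context[of w w' v' "[]"]
  by (simp add: cls_eq_iff) (metis cls_eq_iff)

lemma cls_delete_relator:
  assumes "1 \<le> i"
  shows "cls (u @ relator i @ v) = cls (u @ v)"
proof -
  have "(relator i, []) \<in> pi2_rels"
    using assms unfolding pi2_rels_def relator_def by blast
  then have "(u @ relator i @ v, u @ [] @ v) \<in> pi2_step"
    unfolding pi2_step_def by blast
  then show ?thesis
    unfolding cls_eq_iff pi2_cong_def by auto
qed

lemma cls_push_letter: "cls (push_letter s x) = cls (s @ [x])"
  by (cases s x rule: push_letter_cases) (use cls_delete_relator[of _ _ "[]"] in auto)

lemma cls_reduce: "cls (reduce s w) = cls (s @ w)"
proof (induction w arbitrary: s)
  case (Cons x w)
  then show ?case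
    using cls_append_cong[OF cls_push_letter refl, of s x w] by simp
qed simp

lemma reduce_pi2_step: "(v, w) \<in> pi2_step \<Longrightarrow> reduce [] v = reduce [] w"
  unfolding pi2_step_def pi2_rels_def
  by (auto simp: reduce_relator reduced_reduce simp flip: relator_def)

lemma reduce_eq_if_cls_eq: "cls v = cls w \<Longrightarrow> reduce [] v = reduce [] w"
  unfolding cls_eq_iff pi2_cong_def
  by (induction rule: rtrancl_induct) (auto dest: reduce_pi2_step)

lemma hd_eq_Ga_if_reduce_eq_Nil: "reduce s t = [] \<Longrightarrow> s \<noteq> [] \<Longrightarrow> hd s = Ga"
proof (induction t arbitrary: s)
  case (Cons x t)
  show ?case
  proof (cases s x rule: push_letter_cases)
    case keep
    with Cons have "hd (s @ [x]) = Ga" by simp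
    with Cons.prems(2) show ?thesis by simp
  next
    case (pop u i)
    then have "hd (s @ [x]) = hd (u @ relator i)" by simp
    moreover have "u \<noteq> [] \<Longrightarrow> hd u = Ga" using Cons pop(3) by simp
    ultimately show ?thesis using Cons.prems(2) by (cases "u = []") simp_all
  qed
qed simp

lemma reduce_first_pop:
  "reduce s t \<noteq> s @ t \<Longrightarrow> \<exists>t1 t2 u i. t = t1 @ t2 \<and> 1 \<le> i \<and> s @ t1 = u @ relator i"
proof (induction t arbitrary: s)
  case (Cons x t)
  show ?case
  proof (cases s x rule: push_letter_cases)
    case keep
    with Cons.prems have "reduce (s @ [x]) t \<noteq> (s @ [x]) @ t" by simp
    then obtain t1 t2 u i where "t = t1 @ t2" "1 \<le> i" "(s @ [x]) @ t1 = u @ relator i"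
      using Cons.IH by blast
    then show ?thesis
      by (intro exI[of _ "x # t1"] exI[of _ t2] exI[of _ u] exI[of _ i]) simp
  next
    case (pop u i)
    then show ?thesis
      by (intro exI[of _ "[x]"] exI[of _ t] exI[of _ u] exI[of _ i]) simp
  qed
qed simp

lemma lam_word_proper_suffix_hd:
  assumes "p @ q = lam_word i" "p \<noteq> []" "q \<noteq> []"
  shows "hd q \<noteq> Ga"
proof -
  from assms(1,2) obtain p' where "p = Ga # p'"
    by (cases p) (auto simp: lam_word_def)
  with assms(1) have "p' @ q = replicate i Gb @ [Gc]"
    by (simp add: lam_word_def)
  then have "hd q \<in> set (replicate i Gb @ [Gc])"
    using assms(3) by (metis Un_iff hd_in_set set_append)
  then show ?thesis by (auto split: if_splits)
qed

lemma relator_proper_suffix_hd_Ga: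
  assumes "relator i = p @ q" "p \<noteq> []" "q \<noteq> []" "hd q = Ga"
  shows "q = lam_word i"
proof -
  from assms(1) obtain w where
    "lam_word i = p @ w \<and> w @ lam_word i = q \<or> lam_word i @ w = p \<and> lam_word i = w @ q"
    unfolding relator_def by (auto simp: append_eq_append_conv2)
  then show ?thesis
  proof
    assume w: "lam_word i = p @ w \<and> w @ lam_word i = q"
    show ?thesis
    proof (cases "w = []")
      case False
      then have "hd w \<noteq> Ga" using w assms(2) lam_word_proper_suffix_hd by metis
      with w False assms(4) show ?thesis by auto
    qed (use w in auto)
  next
    assume w: "lam_word i @ w = p \<and> lam_word i = w @ q"
    show ?thesis
    proof (cases "w = []")
      case False
      with w assms(3,4) show ?thesis using lam_word_proper_suffix_hd by metis
    qed (use w in \<open>metis append_Nil\<close>)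
  qed
qed

lemma carrier_Pi2: "carrier Pi2 = range cls"
  by (auto simp: Pi2_def quotient_def cls_def)

lemma one_Pi2: "\<one>\<^bsub>Pi2\<^esub> = cls []"
  by (simp add: Pi2_def)

lemma mult_Pi2: "cls v \<otimes>\<^bsub>Pi2\<^esub> cls w = cls (v @ w)"
proof -
  have some_cls: "cls (SOME x. x \<in> cls u) = cls u" for u
  proof -
    have "u \<in> cls u"
      by (simp add: cls_def pi2_cong_def)
    then have "(SOME x. x \<in> cls u) \<in> cls u"
      by (rule someI)
    then have "(u, SOME x. x \<in> cls u) \<in> pi2_cong"
      by (simp add: cls_def)
    then show ?thesis
      using cls_eq_iff by metis
  qed
  show ?thesis
    using cls_append_cong[OF some_cls some_cls] by (simp add: Pi2_def)
qed

lemma monoid_Pi2: "monoid Pi2"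
proof (rule monoidI)
  fix x y z
  assume "x \<in> carrier Pi2" "y \<in> carrier Pi2" "z \<in> carrier Pi2"
  then obtain u v w where "x = cls u" "y = cls v" "z = cls w"
    by (auto simp: carrier_Pi2)
  then show "x \<otimes>\<^bsub>Pi2\<^esub> y \<in> carrier Pi2"
    "x \<otimes>\<^bsub>Pi2\<^esub> y \<otimes>\<^bsub>Pi2\<^esub> z = x \<otimes>\<^bsub>Pi2\<^esub> (y \<otimes>\<^bsub>Pi2\<^esub> z)"
    "\<one>\<^bsub>Pi2\<^esub> \<otimes>\<^bsub>Pi2\<^esub> x = x" "x \<otimes>\<^bsub>Pi2\<^esub> \<one>\<^bsub>Pi2\<^esub> = x"
    by (simp_all add: mult_Pi2 one_Pi2 carrier_Pi2)
qed (simp add: one_Pi2 carrier_Pi2)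

lemma cls_in_Units_Pi2E:
  assumes "cls x \<in> Units Pi2"
  obtains u v where "cls (u @ x) = cls []" "cls (x @ v) = cls []"
proof -
  from assms obtain y where "cls y \<otimes>\<^bsub>Pi2\<^esub> cls x = \<one>\<^bsub>Pi2\<^esub>" "cls x \<otimes>\<^bsub>Pi2\<^esub> cls y = \<one>\<^bsub>Pi2\<^esub>"
    unfolding Units_def carrier_Pi2 by blast
  then show thesis
    by (intro that[of y y]) (simp_all add: mult_Pi2 one_Pi2)
qed

lemma cls_lam_word_involution:
  "1 \<le> i \<Longrightarrow> cls (lam_word i) \<otimes>\<^bsub>Pi2\<^esub> cls (lam_word i) = \<one>\<^bsub>Pi2\<^esub>"
  using cls_delete_relator[of i "[]" "[]"] by (simp add: mult_Pi2 one_Pi2 relator_def)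

lemma cls_lam_word_in_Units: "1 \<le> i \<Longrightarrow> cls (lam_word i) \<in> Units Pi2"
  unfolding Units_def carrier_Pi2 using cls_lam_word_involution by blast

lemma reduced_unit_starts_with_lam_word:
  assumes x: "reduced x" "x \<noteq> []" "cls x \<in> Units Pi2"
  obtains i x' where "1 \<le> i" "x = lam_word i @ x'"
proof -
  from x(3) obtain u v where u: "cls (u @ x) = cls []" and v: "cls (x @ v) = cls []"
    by (rule cls_in_Units_Pi2E)
  have "reduce x v = []"
    using reduce_eq_if_cls_eq[OF v] reduce_reduced[of "[]" x] x(1) by simp
  then have hd_x: "hd x = Ga"
    using x(2) by (rule hd_eq_Ga_if_reduce_eq_Nil)
  define s where "s = reduce [] u"
  have s: "reduced s"
    unfolding s_def by (rule reduced_reduce[OF reduced_Nil])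
  have "reduce s x = []"
    using reduce_eq_if_cls_eq[OF u] by (simp add: s_def)
  with x(2) obtain t1 t2 u' i where t: "x = t1 @ t2" "1 \<le> i" "s @ t1 = u' @ relator i"
    using reduce_first_pop[of s x] by auto
  moreover have "t1 \<noteq> w @ relator i" for w
    using x(1) t(1,2) unfolding reduced_def by (metis append.assoc)
  ultimately obtain p where p: "s = u' @ p" "relator i = p @ t1"
    by (auto simp: append_eq_append_conv2)
  have "p \<noteq> []"
    using x(1) t p unfolding reduced_def by (metis append_Nil)
  moreover have "t1 \<noteq> []"
    using s t p unfolding reduced_def by (metis append_Nil2)
  moreover have "hd t1 = Ga"
    using hd_x t(1) \<open>t1 \<noteq> []\<close> by simp
  ultimately have "t1 = lam_word i"
    using p(2) by (rule relator_proper_suffix_hd_Ga[rotated])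
  with t that show thesis by blast
qed

lemma reduced_unit_in_gen_submonoid:
  "reduced x \<Longrightarrow> cls x \<in> Units Pi2 \<Longrightarrow> cls x \<in> gen_submonoid Pi2 (cls ` Lambda)"
proof (induction x rule: length_induct)
  case (1 x)
  show ?case
  proof (cases "x = []")
    case True
    then show ?thesis using gen_submonoid_one[of Pi2] by (simp add: one_Pi2)
  next
    case False
    obtain i x' where i: "1 \<le> i" and x: "x = lam_word i @ x'"
      using reduced_unit_starts_with_lam_word[OF "1.prems"(1) False "1.prems"(2)] .
    have lam_in_gen: "cls (lam_word i) \<in> gen_submonoid Pi2 (cls ` Lambda)"
      using i by (intro gen_submonoid_base) (auto simp: Lambda_def)
    have "cls x' = cls (lam_word i) \<otimes>\<^bsub>Pi2\<^esub> cls x"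
      using cls_delete_relator[OF i, of "[]" x'] x by (simp add: mult_Pi2 relator_def)
    then have "cls x' \<in> Units Pi2"
      using monoid.Units_m_closed[OF monoid_Pi2 cls_lam_word_in_Units[OF i] "1.prems"(2)] by simp
    moreover have "reduced x'"
      using "1.prems"(1) x reduced_appendD(2) by blast
    moreover have "length x' < length x"
      using x by (simp add: lam_word_def)
    ultimately have "cls x' \<in> gen_submonoid Pi2 (cls ` Lambda)"
      using "1.IH" by blast
    with lam_in_gen have "cls (lam_word i) \<otimes>\<^bsub>Pi2\<^esub> cls x' \<in> gen_submonoid Pi2 (cls ` Lambda)"
      by (rule gen_submonoid_mult)
    with x show ?thesis
      by (simp add: mult_Pi2)
  qed
qed

theorem mainTheorem8:
  shows "gen_submonoid Pi2 (cls ` Lambda) = Units Pi2"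
proof
  show "gen_submonoid Pi2 (cls ` Lambda) \<subseteq> Units Pi2"
    using monoid.submonoid_Units[OF monoid_Pi2]
    by (rule gen_submonoid_least) (auto simp: Lambda_def cls_lam_word_in_Units)
  show "Units Pi2 \<subseteq> gen_submonoid Pi2 (cls ` Lambda)"
  proof
    fix X
    assume X: "X \<in> Units Pi2"
    then obtain w where "X = cls w"
      unfolding Units_def carrier_Pi2 by blast
    then have "X = cls (reduce [] w)"
      by (simp add: cls_reduce)
    with X show "X \<in> gen_submonoid Pi2 (cls ` Lambda)"
      using reduced_unit_in_gen_submonoid[OF reduced_reduce[OF reduced_Nil]] by simp
  qed
qed

end
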